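(* Fix $0<q<1$. For every $G\in\mathcal G$ with $G\ne E$, the equation $\bar G(t)=\frac1q\bar E(t)$ has a unique solution $t\in[0,\infty)$; this solution equals $T_q(G)$.
   Context: $E(t)=1-e^{-t}$ is the standard exponential cdf, $\bar E=1-E$, $\bar G=1-G$. $\mathcal G=\{E\#F:F$ a probability distribution on $[1,\infty)\}$, where $(E\#F)(t)=\int E(t/\mu)\,dF(\mu)$ (scale mixtures of exponentials with scales $\ge1$). FDR functional: $T_q(G)=\inf\{t:\bar G(t)\ge\frac1q\bar E(t)\}$. *)

theory Defs
  imports "HOL-Probability.Probability"
begin

definition Ecdf :: "real \<Rightarrow> real" where
  "Ecdf t = (if t < 0 then 0 else 1 - exp (- t))"

definition Ebar :: "real \<Rightarrow> real" where
  "Ebar t = 1 - Ecdf t"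

definition scale_mix :: "real measure \<Rightarrow> real \<Rightarrow> real" where
  "scale_mix F t = (\<integral>\<mu>. Ecdf (t / \<mu>) \<partial>F)"

definition mixG :: "(real \<Rightarrow> real) set" where
  "mixG = {scale_mix F | F. prob_space F \<and> sets F = sets borel \<and> emeasure F {1..} = 1}"

definition survival :: "(real \<Rightarrow> real) \<Rightarrow> real \<Rightarrow> real" where
  "survival G t = 1 - G t"

definition Tq :: "real \<Rightarrow> (real \<Rightarrow> real) \<Rightarrow> real" where
  "Tq q G = Inf {t. survival G t \<ge> (1 / q) * Ebar t}"

end

theory Submission
  imports Defs
begin

(* For t >= 0 and a mixing distribution F on [1, oo), the ratio of survival functions is
     h t = Gbar t / Ebar t = integral of exp (t (1 - 1/mu)) dF(mu),
   a convex function with h 0 = 1 and h t >= 1 + t m, where m = integral of (1 - 1/mu) dF.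
   If G is not E then F charges (1, oo), so m > 0; convexity together with h t > h 0 for t > 0
   makes h continuous and strictly increasing on [0, oo), so it crosses 1/q exactly once, at t0.
   For t < 0 instead Gbar t = 1 < Ebar t / q.  Hence {t. Gbar t >= Ebar t / q} = [t0, oo),
   whose infimum is t0. *)

lemma convex_on_strict_mono_on_atLeast:
  fixes f :: "real \<Rightarrow> real"
  assumes convex: "convex_on {a..} f" and above_base: "\<And>t. a < t \<Longrightarrow> f a < f t"
  shows "strict_mono_on {a..} f"
proof (rule strict_mono_onI)
  fix s t assume s: "s \<in> {a..}" and t: "t \<in> {a..}" and "s < t"
  show "f s < f t"
  proof (cases "s = a")
    case True
    then show ?thesis using above_base \<open>s < t\<close> by simp
  next
    case False
    define u where "u = (s - a) / (t - a)"
    have u: "0 < u" "u < 1" using s False \<open>s < t\<close> by (auto simp: u_def field_simps)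
    have "u * (t - a) = s - a" using \<open>s < t\<close> s by (simp add: u_def)
    then have "s = (1 - u) *\<^sub>R a + u *\<^sub>R t" by (simp add: algebra_simps)
    then have "f s \<le> (1 - u) * f a + u * f t"
      using convex_onD[OF convex, of u a t] u t by simp
    also have "\<dots> < (1 - u) * f t + u * f t"
      using above_base[of t] s \<open>s < t\<close> u by (intro add_strict_right_mono mult_strict_left_mono) auto
    also have "\<dots> = f t" by (simp add: algebra_simps)
    finally show ?thesis .
  qed
qed

lemma strict_mono_on_level_sets:
  fixes h :: "real \<Rightarrow> real"
  assumes "strict_mono_on {a..} h" "a \<le> t\<^sub>0" "h t\<^sub>0 = c"
  shows "{t. a \<le> t \<and> c \<le> h t} = {t\<^sub>0..}" and "{t. a \<le> t \<and> h t = c} = {t\<^sub>0}"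
  using assms
  by (auto simp: strict_mono_on_less_eq[OF assms(1)] strict_mono_on_eq[OF assms(1)])

locale mixing_distribution = prob_space F for F :: "real measure" +
  assumes sets_eq_borel: "sets F = sets borel"
    and AE_ge_1: "AE \<mu> in F. 1 \<le> \<mu>"
begin

lemma borel_measurable_eq: "borel_measurable F = borel_measurable borel"
  by (rule measurable_cong_sets[OF sets_eq_borel refl])

definition mix_ratio :: "real \<Rightarrow> real" where
  "mix_ratio t = (\<integral>\<mu>. exp (t * (1 - 1 / \<mu>)) \<partial>F)"

definition mean_gap :: real where
  "mean_gap = (\<integral>\<mu>. 1 - 1 / \<mu> \<partial>F)"

lemma gap_bounds: "1 \<le> \<mu> \<Longrightarrow> 0 \<le> 1 - 1 / \<mu> \<and> 1 - 1 / \<mu> \<le> (1::real)"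
  by (simp add: field_simps)

lemma integrable_exp_gap: "integrable F (\<lambda>\<mu>. exp (t * (1 - 1 / \<mu>)))"
proof (rule integrable_const_bound[where B = "exp \<bar>t\<bar>"])
  show "AE \<mu> in F. norm (exp (t * (1 - 1 / \<mu>))) \<le> exp \<bar>t\<bar>"
    using AE_ge_1
  proof eventually_elim
    case (elim \<mu>)
    then have "t * (1 - 1 / \<mu>) \<le> \<bar>t\<bar>"
      using gap_bounds[OF elim] by (smt (verit) mult_left_le mult_nonneg_nonneg mult_nonpos_nonneg)
    then show ?case by simp
  qed
qed (simp add: borel_measurable_eq)

lemma integrable_gap: "integrable F (\<lambda>\<mu>. 1 - 1 / \<mu>)"
proof (rule integrable_const_bound[where B = 1])
  show "AE \<mu> in F. norm (1 - 1 / \<mu>) \<le> 1"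
    using AE_ge_1 by eventually_elim (use gap_bounds in auto)
qed (simp add: borel_measurable_eq)

lemma integrable_Ecdf_scaled: "integrable F (\<lambda>\<mu>. Ecdf (t / \<mu>))"
  by (rule integrable_const_bound[where B = 1]) (auto simp: Ecdf_def borel_measurable_eq)

lemma mix_ratio_0 [simp]: "mix_ratio 0 = 1"
  by (simp add: mix_ratio_def prob_space)

lemma survival_scale_mix:
  assumes "0 \<le> t"
  shows "survival (scale_mix F) t = exp (- t) * mix_ratio t"
proof -
  have "survival (scale_mix F) t = (\<integral>\<mu>. 1 - Ecdf (t / \<mu>) \<partial>F)"
    using integrable_Ecdf_scaled[of t] by (simp add: survival_def scale_mix_def prob_space)
  also have "\<dots> = (\<integral>\<mu>. exp (- t) * exp (t * (1 - 1 / \<mu>)) \<partial>F)"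
  proof (rule integral_cong_AE)
    show "AE \<mu> in F. 1 - Ecdf (t / \<mu>) = exp (- t) * exp (t * (1 - 1 / \<mu>))"
      using AE_ge_1
    proof eventually_elim
      case (elim \<mu>)
      then have "0 \<le> t / \<mu>" using assms by simp
      then have "1 - Ecdf (t / \<mu>) = exp (- t + t * (1 - 1 / \<mu>))"
        by (simp add: Ecdf_def algebra_simps)
      then show ?case by (simp only: exp_add)
    qed
  qed (auto simp: Ecdf_def borel_measurable_eq)
  finally show ?thesis by (simp add: mix_ratio_def)
qed

lemma survival_scale_mix_neg:
  assumes "t < 0"
  shows "survival (scale_mix F) t = 1"
proof -
  have "(\<integral>\<mu>. Ecdf (t / \<mu>) \<partial>F) = (\<integral>\<mu>. 0 \<partial>F)"
  proof (rule integral_cong_AE)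
    show "AE \<mu> in F. Ecdf (t / \<mu>) = 0"
      using AE_ge_1 by eventually_elim (use assms in \<open>auto simp: Ecdf_def divide_neg_pos\<close>)
  qed (auto simp: Ecdf_def borel_measurable_eq)
  then show ?thesis by (simp add: survival_def scale_mix_def)
qed

lemma scale_mix_eq_Ecdf:
  assumes "emeasure F {1<..} = 0"
  shows "scale_mix F = Ecdf"
proof
  fix t
  have "{1<..} \<in> null_sets F" using assms sets_eq_borel by (auto simp: null_sets_def)
  then have "AE \<mu> in F. \<mu> = 1" using AE_ge_1 AE_not_in by (fastforce elim: eventually_mono)
  then have "AE \<mu> in F. Ecdf (t / \<mu>) = Ecdf t" by eventually_elim simp
  then have "scale_mix F t = (\<integral>\<mu>. Ecdf t \<partial>F)"
    unfolding scale_mix_def by (rule integral_cong_AE[rotated 2]) (auto simp: Ecdf_def borel_measurable_eq)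
  then show "scale_mix F t = Ecdf t" by (simp add: prob_space)
qed

lemma convex_on_mix_ratio: "convex_on UNIV mix_ratio"
proof (rule convex_onI)
  fix s x y :: real assume "0 < s" "s < 1"
  let ?e = "\<lambda>t \<mu>. exp (t * (1 - 1 / \<mu>))"
  have "mix_ratio ((1 - s) *\<^sub>R x + s *\<^sub>R y) = (\<integral>\<mu>. ?e ((1 - s) * x + s * y) \<mu> \<partial>F)"
    by (simp add: mix_ratio_def)
  also have "\<dots> \<le> (\<integral>\<mu>. (1 - s) * ?e x \<mu> + s * ?e y \<mu> \<partial>F)"
  proof (rule integral_mono)
    fix \<mu> :: real
    define w where "w = 1 - 1 / \<mu>"
    have "?e ((1 - s) * x + s * y) \<mu> = exp ((1 - s) * (x * w) + s * (y * w))"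
      unfolding w_def[symmetric] by (simp add: distrib_right mult.assoc)
    also have "\<dots> \<le> (1 - s) * exp (x * w) + s * exp (y * w)"
      using convex_onD[OF exp_convex, of s "x * w" "y * w"] \<open>0 < s\<close> \<open>s < 1\<close> by simp
    finally show "?e ((1 - s) * x + s * y) \<mu> \<le> (1 - s) * ?e x \<mu> + s * ?e y \<mu>"
      by (simp add: w_def)
  qed (auto intro!: integrable_add integrable_exp_gap)
  also have "\<dots> = (1 - s) * mix_ratio x + s * mix_ratio y"
    using integrable_exp_gap by (simp add: mix_ratio_def)
  finally show "mix_ratio ((1 - s) *\<^sub>R x + s *\<^sub>R y) \<le> (1 - s) * mix_ratio x + s * mix_ratio y" .
qed simp

lemma continuous_on_mix_ratio: "continuous_on UNIV mix_ratio"
  by (rule convex_on_continuous[OF open_UNIV convex_on_mix_ratio])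

lemma mix_ratio_ge_linear: "1 + t * mean_gap \<le> mix_ratio t"
proof -
  have "1 + t * mean_gap = (\<integral>\<mu>. 1 + t * (1 - 1 / \<mu>) \<partial>F)"
    using integrable_gap by (simp add: mean_gap_def prob_space)
  also have "\<dots> \<le> mix_ratio t"
    unfolding mix_ratio_def
    by (rule integral_mono) (auto intro!: integrable_add integrable_gap integrable_exp_gap)
  finally show ?thesis .
qed

lemma mean_gap_pos:
  assumes "emeasure F {1<..} \<noteq> 0"
  shows "0 < mean_gap"
proof -
  have "(\<integral>\<mu>. 0 \<partial>F) < mean_gap"
    unfolding mean_gap_def
  proof (rule integral_less_AE[OF _ integrable_gap assms])
    show "AE \<mu> in F. 0 \<le> 1 - 1 / \<mu>" using AE_ge_1 by eventually_elim (use gap_bounds in auto)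
  qed (auto simp: sets_eq_borel)
  then show ?thesis by simp
qed

lemma strict_mono_on_mix_ratio:
  assumes "emeasure F {1<..} \<noteq> 0"
  shows "strict_mono_on {0..} mix_ratio"
proof (rule convex_on_strict_mono_on_atLeast)
  show "convex_on {0..} mix_ratio" using convex_on_mix_ratio by (rule convex_on_subset) simp_all
  show "mix_ratio 0 < mix_ratio t" if "0 < t" for t
    using mix_ratio_ge_linear[of t] mult_pos_pos[OF that mean_gap_pos[OF assms]]
    by simp
qed

lemma mix_ratio_attains:
  assumes "emeasure F {1<..} \<noteq> 0" and "1 \<le> c"
  shows "\<exists>t\<ge>0. mix_ratio t = c"
proof -
  define b where "b = (c - 1) / mean_gap"
  have "0 \<le> b" using assms mean_gap_pos[OF assms(1)] by (simp add: b_def)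
  moreover have "c \<le> mix_ratio b"
    using mix_ratio_ge_linear[of b] mean_gap_pos[OF assms(1)] by (simp add: b_def)
  ultimately show ?thesis
    using IVT'[of mix_ratio 0 c b] continuous_on_subset[OF continuous_on_mix_ratio] assms(2)
    by fastforce
qed

lemma survival_eq_iff:
  assumes "0 \<le> t"
  shows "survival (scale_mix F) t = c * Ebar t \<longleftrightarrow> mix_ratio t = c"
  using assms by (simp add: survival_scale_mix Ebar_def Ecdf_def mult.commute)

lemma survival_ge_iff:
  assumes "1 < c"
  shows "c * Ebar t \<le> survival (scale_mix F) t \<longleftrightarrow> 0 \<le> t \<and> c \<le> mix_ratio t"
proof (cases "0 \<le> t")
  case True
  then show ?thesis by (simp add: survival_scale_mix Ebar_def Ecdf_def mult.commute)
next
  case False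
  then show ?thesis using assms by (simp add: survival_scale_mix_neg Ebar_def Ecdf_def)
qed

end

lemma mixG_imp_mixing_distribution:
  assumes "G \<in> mixG"
  obtains F where "mixing_distribution F" and "G = scale_mix F"
proof -
  from assms obtain F where F: "prob_space F" "sets F = sets borel" "emeasure F {1..} = 1"
    and "G = scale_mix F"
    unfolding mixG_def by auto
  interpret prob_space F by fact
  have "AE \<mu> in F. 1 \<le> \<mu>"
    using AE_prob_1[of "{1..}"] F(2,3) by (auto simp: emeasure_eq_measure elim: eventually_mono)
  then have "mixing_distribution F"
    using F by unfold_locales
  then show thesis using \<open>G = scale_mix F\<close> by (rule that)
qed

theorem lemma4p1:
  fixes q :: real and G :: "real \<Rightarrow> real"
  assumes "0 < q" and "q < 1"
    and "G \<in> mixG" and "G \<noteq> Ecdf"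
  shows "(\<exists>!t. t \<ge> 0 \<and> survival G t = (1 / q) * Ebar t) \<and>
         (\<forall>t. t \<ge> 0 \<and> survival G t = (1 / q) * Ebar t \<longrightarrow> t = Tq q G)"
proof -
  obtain F where "mixing_distribution F" and G: "G = scale_mix F"
    using assms(3) by (rule mixG_imp_mixing_distribution)
  interpret mixing_distribution F by fact
  have mass: "emeasure F {1<..} \<noteq> 0"
    using scale_mix_eq_Ecdf assms(4) G by blast
  have "1 < 1 / q" using assms(1,2) by simp
  then obtain t\<^sub>0 where "0 \<le> t\<^sub>0" and t\<^sub>0: "mix_ratio t\<^sub>0 = 1 / q"
    using mix_ratio_attains[OF mass, of "1 / q"] by auto
  note level_sets = strict_mono_on_level_sets[OF strict_mono_on_mix_ratio[OF mass] \<open>0 \<le> t\<^sub>0\<close> t\<^sub>0]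
  have roots: "t \<ge> 0 \<and> survival G t = (1 / q) * Ebar t \<longleftrightarrow> t = t\<^sub>0" for t
    using level_sets(2) survival_eq_iff[of t "1 / q"] unfolding G by blast
  have "{t. survival G t \<ge> (1 / q) * Ebar t} = {t\<^sub>0..}"
    using level_sets(1) survival_ge_iff[OF \<open>1 < 1 / q\<close>] unfolding G by blast
  then have "Tq q G = t\<^sub>0" by (simp add: Tq_def)
  with roots show ?thesis by simp
qed

end
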